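(* Let $k$ be a field, $G$ a group, $n\ge1$, $V=k^n$, and $\omega=(\alpha,\beta)\in D^1(M_n(k)[G])$. Define $\tau^\omega\colon V^G\to V^G$ by $\tau^\omega(x)(g)=\sum_{h\in G}\alpha(h)x(gh)+\sum_{h\in G}\beta(g)(h)x(gh)$ for $x\in V^G$, $g\in G$. Then $\tau^\omega\in\mathrm{LNUCA}_c(G,k^n)$.
   Context: For a ring $R$ (here $R=M_n(k)$), $R[G]$ is the group ring and $(R[G])[G]$ is the set of finitely supported maps $\beta\colon G\to R[G]$, with $\beta(g)(h)\in R$. $D^1(R[G])$ is the set $R[G]\times(R[G])[G]$ (with a ring structure not needed here). For $g\in G$ and $x\in V^G$, $(gx)(h)=x(g^{-1}h)$. For finite $M\subset G$ and $s\in\mathcal{L}(V^M,V)^G$, $\sigma_s(x)(g)=s(g)((g^{-1}x)\vert_M)$. $\mathrm{LNUCA}_c(G,V)$ is the set of maps $\sigma_s$ with $M$ finite and $s$ constant outside some finite subset of $G$. *)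

theory Defs
  imports "HOL-Analysis.Analysis"
begin

text \<open>The group G is a type of class group_add (written additively, not assumed abelian),
  so the product gh is written g + h and g^{-1} is -g.
  V = k^n is the type 'k^'n for a finite index type 'n; M_n(k) is 'k^'n^'n.\<close>

definition fin_supp :: "('a \<Rightarrow> 'b::zero) \<Rightarrow> bool" where
  "fin_supp f \<longleftrightarrow> finite {x. f x \<noteq> 0}"

definition group_ring :: "('g \<Rightarrow> 'r::zero) set" where
  "group_ring = {f. fin_supp f}"

text \<open>D^1(R[G]) as a set: R[G] \<times> (R[G])[G].\<close>
definition D1 :: "(('g \<Rightarrow> 'r::zero) \<times> ('g \<Rightarrow> 'g \<Rightarrow> 'r)) set" where
  "D1 = {(\<alpha>, \<beta>). \<alpha> \<in> group_ring \<and> (\<forall>g. \<beta> g \<in> group_ring) \<and> finite {g. \<beta> g \<noteq> (\<lambda>_. 0)}}"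

definition tau_omega :: "('g::group_add \<Rightarrow> 'k::field^'n^'n) \<times> ('g \<Rightarrow> 'g \<Rightarrow> 'k^'n^'n)
    \<Rightarrow> ('g \<Rightarrow> 'k^'n) \<Rightarrow> ('g \<Rightarrow> 'k^'n)" where
  "tau_omega \<omega> x g =
     (\<Sum>h\<in>{h. fst \<omega> h \<noteq> 0}. fst \<omega> h *v x (g + h))
   + (\<Sum>h\<in>{h. snd \<omega> g h \<noteq> 0}. snd \<omega> g h *v x (g + h))"

text \<open>V^M is represented by the functions G \<Rightarrow> V vanishing outside M.\<close>
definition VM :: "'g set \<Rightarrow> ('g \<Rightarrow> 'k::field^'n) set" where
  "VM M = {u. \<forall>m. m \<notin> M \<longrightarrow> u m = 0}"

definition klinear_on :: "'g set \<Rightarrow> (('g \<Rightarrow> 'k::field^'n) \<Rightarrow> 'k^'n) \<Rightarrow> bool" where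
  "klinear_on M L \<longleftrightarrow>
     (\<forall>u\<in>VM M. \<forall>v\<in>VM M. L (\<lambda>m. u m + v m) = L u + L v) \<and>
     (\<forall>u\<in>VM M. \<forall>c::'k. L (\<lambda>m. c *s u m) = c *s L u)"

text \<open>sigma_s(x)(g) = s(g)((g^{-1}x)|_M), where (g^{-1}x)(m) = x(gm).\<close>
definition sigma :: "'g set \<Rightarrow> ('g \<Rightarrow> ('g \<Rightarrow> 'k::field^'n) \<Rightarrow> 'k^'n)
    \<Rightarrow> ('g::group_add \<Rightarrow> 'k^'n) \<Rightarrow> ('g \<Rightarrow> 'k^'n)" where
  "sigma M s x g = s g (\<lambda>m. if m \<in> M then x (g + m) else 0)"

definition LNUCA_c :: "(('g::group_add \<Rightarrow> 'k::field^'n) \<Rightarrow> ('g \<Rightarrow> 'k^'n)) set" where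
  "LNUCA_c = {\<sigma>. \<exists>M s. finite M \<and> (\<forall>g. klinear_on M (s g)) \<and>
      (\<exists>F s0. finite F \<and> (\<forall>g. g \<notin> F \<longrightarrow> (\<forall>u\<in>VM M. s g u = s0 u))) \<and>
      \<sigma> = sigma M s}"

end

theory Submission
  imports Defs
begin

text \<open>Both sums in the definition of \<open>\<tau>\<^sup>\<omega>\<close> only look at \<open>x\<close> on \<open>g + M\<close>, where \<open>M\<close> is the union
  of the support of \<open>\<alpha>\<close> and the supports of the finitely many nonzero \<open>\<beta>(g)\<close>; so \<open>\<tau>\<^sup>\<omega>\<close> is
  \<open>\<sigma>\<^sub>s\<close> for the local rules \<open>s(g)(u) = \<Sum>\<^sub>h \<alpha>(h) u(h) + \<Sum>\<^sub>h \<beta>(g)(h) u(h)\<close>, which are linear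
  and equal to the \<open>\<alpha>\<close>-part alone whenever \<open>\<beta>(g) = 0\<close>.\<close>

definition matrix_weighted_sum :: "('g \<Rightarrow> 'k::field^'n^'n) \<Rightarrow> ('g \<Rightarrow> 'k^'n) \<Rightarrow> 'k^'n" where
  "matrix_weighted_sum A u = (\<Sum>h\<in>{h. A h \<noteq> 0}. A h *v u h)"

lemma klinear_on_matrix_weighted_sum: "klinear_on M (matrix_weighted_sum A)"
  unfolding klinear_on_def matrix_weighted_sum_def
  by (simp add: matrix_vector_right_distrib sum.distrib vector_scalar_commute
      flip: sum_cmul)

lemma klinear_on_add:
  assumes "klinear_on M L" and "klinear_on M L'"
  shows "klinear_on M (\<lambda>u. L u + L' u)"
  using assms unfolding klinear_on_def by (simp add: algebra_simps vector_sadd_rdistrib)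

lemma matrix_weighted_sum_restrict:
  assumes "{h. A h \<noteq> 0} \<subseteq> M"
  shows "matrix_weighted_sum A (\<lambda>m. if m \<in> M then u m else 0) = matrix_weighted_sum A u"
  unfolding matrix_weighted_sum_def using assms by (intro sum.cong) auto

lemma tau_omega_eq_sigma:
  assumes "{h. \<alpha> h \<noteq> 0} \<subseteq> M" and "\<And>g. {h. \<beta> g h \<noteq> 0} \<subseteq> M"
  shows "tau_omega (\<alpha>, \<beta>) =
    sigma M (\<lambda>g u. matrix_weighted_sum \<alpha> u + matrix_weighted_sum (\<beta> g) u)"
proof (intro ext)
  fix x g
  show "tau_omega (\<alpha>, \<beta>) x g =
    sigma M (\<lambda>g u. matrix_weighted_sum \<alpha> u + matrix_weighted_sum (\<beta> g) u) x g"
    using matrix_weighted_sum_restrict[OF assms(1), of "\<lambda>h. x (g + h)"]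
      matrix_weighted_sum_restrict[OF assms(2), of g "\<lambda>h. x (g + h)"]
    by (simp add: tau_omega_def sigma_def matrix_weighted_sum_def)
qed

lemma D1_finite_joint_support:
  assumes "(\<alpha>, \<beta>) \<in> D1"
  defines "M \<equiv> {h. \<alpha> h \<noteq> 0} \<union> (\<Union>g\<in>{g. \<beta> g \<noteq> (\<lambda>_. 0)}. {h. \<beta> g h \<noteq> 0})"
  shows "finite M" and "\<And>g. {h. \<beta> g h \<noteq> 0} \<subseteq> M"
proof -
  show "finite M" using assms by (auto simp: D1_def group_ring_def fin_supp_def)
  show "{h. \<beta> g h \<noteq> 0} \<subseteq> M" for g
    unfolding M_def by (cases "\<beta> g = (\<lambda>_. 0)") auto
qed

theorem lemma6p1:
  fixes \<omega> :: "('g::group_add \<Rightarrow> 'k::field^'n^'n) \<times> ('g \<Rightarrow> 'g \<Rightarrow> 'k^'n^'n)"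
  assumes "\<omega> \<in> D1"
  shows "tau_omega \<omega> \<in> LNUCA_c"
proof -
  obtain \<alpha> \<beta> where \<omega>: "\<omega> = (\<alpha>, \<beta>)" by fastforce
  define F where "F = {g. \<beta> g \<noteq> (\<lambda>_. 0)}"
  define M where "M = {h. \<alpha> h \<noteq> 0} \<union> (\<Union>g\<in>F. {h. \<beta> g h \<noteq> 0})"
  define s where "s = (\<lambda>g u. matrix_weighted_sum \<alpha> u + matrix_weighted_sum (\<beta> g) u)"
  have D1: "(\<alpha>, \<beta>) \<in> D1" using assms \<omega> by simp
  have "finite M" "\<And>g. {h. \<beta> g h \<noteq> 0} \<subseteq> M"
    using D1_finite_joint_support[OF D1] unfolding M_def F_def by blast+
  then have "tau_omega \<omega> = sigma M s"
    unfolding \<omega> s_def by (intro tau_omega_eq_sigma) (auto simp: M_def)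
  moreover have "klinear_on M (s g)" for g
    unfolding s_def by (intro klinear_on_add klinear_on_matrix_weighted_sum)
  moreover have "s g u = matrix_weighted_sum \<alpha> u" if "g \<notin> F" for g u
    using that by (simp add: s_def F_def matrix_weighted_sum_def)
  moreover have "finite F" using D1 by (simp add: D1_def F_def)
  ultimately show ?thesis
    unfolding LNUCA_c_def using \<open>finite M\<close> by blast
qed

end
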